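(* For the $N$-relay 1-2-1 diamond network with relays operating in FD, the linear program $\mathrm{P1^d}$ (with $\mathsf C_p=\min\{\ell_{p,0},\ell_{N+1,p}\}$) has an optimal solution $(x_1,\dots,x_N)$ with at most $2$ indices $p$ such that $x_p>0$. Hence the FD approximate capacity $\mathsf{C}_{\rm cs,iid}$ is achieved by activating at most two relays, independently of $N$.
   Context: Diamond network: nodes $[0:N+1]$, source $0$, destination $N+1$, relays $[1:N]$; the only links are $(0,p)$ and $(p,N+1)$ for $p\in[1:N]$, with positive rational capacities $\ell_{p,0}$ and $\ell_{N+1,p}$. $\mathrm{P1^d}$ is the linear program $\max\sum_{p=1}^N x_p\mathsf C_p$ subject to $0\le x_p\le1$ for all $p\in[1:N]$, $\sum_{p=1}^N x_p\mathsf C_p/\ell_{p,0}\le1$, and $\sum_{p=1}^N x_p\mathsf C_p/\ell_{N+1,p}\le1$. In the FD case its optimal value equals $\mathsf{C}_{\rm cs,iid}$, the FD approximate capacity $\max_\lambda\min_\Omega\sum_{i\in\Omega,j\in\Omega^c}(\sum_{s:\,(i,j)\text{ active in }s}\lambda_s)\ell_{j,i}$ over probability vectors on FD beam states and cuts $0\in\Omega\subseteq[0:N]$. *)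

theory Defs
  imports Complex_Main
begin

text \<open>Diamond network with relays 1..N. lsr p = link capacity from source 0 to relay p
  (ell_{p,0}); lrd p = link capacity from relay p to destination N+1 (ell_{N+1,p}).\<close>

definition Cp :: "(nat \<Rightarrow> real) \<Rightarrow> (nat \<Rightarrow> real) \<Rightarrow> nat \<Rightarrow> real" where
  "Cp lsr lrd p = min (lsr p) (lrd p)"

definition P1d_obj :: "nat \<Rightarrow> (nat \<Rightarrow> real) \<Rightarrow> (nat \<Rightarrow> real) \<Rightarrow> (nat \<Rightarrow> real) \<Rightarrow> real" where
  "P1d_obj N lsr lrd x = (\<Sum>p=1..N. x p * Cp lsr lrd p)"

definition P1d_feasible :: "nat \<Rightarrow> (nat \<Rightarrow> real) \<Rightarrow> (nat \<Rightarrow> real) \<Rightarrow> (nat \<Rightarrow> real) \<Rightarrow> bool" where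
  "P1d_feasible N lsr lrd x \<longleftrightarrow>
     (\<forall>p\<in>{1..N}. 0 \<le> x p \<and> x p \<le> 1) \<and>
     (\<Sum>p=1..N. x p * Cp lsr lrd p / lsr p) \<le> 1 \<and>
     (\<Sum>p=1..N. x p * Cp lsr lrd p / lrd p) \<le> 1"

definition P1d_optimal :: "nat \<Rightarrow> (nat \<Rightarrow> real) \<Rightarrow> (nat \<Rightarrow> real) \<Rightarrow> (nat \<Rightarrow> real) \<Rightarrow> bool" where
  "P1d_optimal N lsr lrd x \<longleftrightarrow>
     P1d_feasible N lsr lrd x \<and>
     (\<forall>y. P1d_feasible N lsr lrd y \<longrightarrow> P1d_obj N lsr lrd y \<le> P1d_obj N lsr lrd x)"

end

theory Submission imports Defs "HOL-Analysis.Analysis" begin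

text \<open>An optimum exists by compactness of the feasible set. Among the optimal solutions take
  one with the fewest positive coordinates. If it had three positive coordinates \<open>i, j, k\<close>,
  the two homogeneous linear equations given by the source and destination constraints would
  have a nonzero solution \<open>(e\<^sub>i, e\<^sub>j, e\<^sub>k)\<close>; choosing its sign so that the objective
  does not decrease, and moving along it until a coordinate vanishes, keeps feasibility and
  optimality while shrinking the support.\<close>

lemma exists_kernel_direction:
  fixes ai aj ak bi bj bk ci cj ck :: real
  assumes "ai > 0" "aj > 0" "ak > 0"
  shows "\<exists>ei ej ek. ei*ai + ej*aj + ek*ak = 0 \<and> ei*bi + ej*bj + ek*bk = 0 \<and>
     ei*ci + ej*cj + ek*ck \<ge> 0 \<and> (ei < 0 \<or> ej < 0 \<or> ek < 0)"
proof -
  have "\<exists>ei ej ek. ei*ai + ej*aj + ek*ak = 0 \<and> ei*bi + ej*bj + ek*bk = 0 \<and> (ei \<noteq> 0 \<or> ej \<noteq> 0 \<or> ek \<noteq> 0)"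
  proof (cases "aj*bk - ak*bj = 0 \<and> ak*bi - ai*bk = 0 \<and> ai*bj - aj*bi = 0")
    case True
    show ?thesis
      by (rule exI[of _ aj], rule exI[of _ "-ai"], rule exI[of _ 0]) (use True assms in \<open>auto simp: algebra_simps\<close>)
  next
    case False
    \<comment> \<open>the cross product of \<open>a\<close> and \<open>b\<close>\<close>
    show ?thesis
      by (rule exI[of _ "aj*bk - ak*bj"], rule exI[of _ "ak*bi - ai*bk"], rule exI[of _ "ai*bj - aj*bi"])
        (use False in \<open>auto simp: algebra_simps\<close>)
  qed
  then obtain ei ej ek where e: "ei*ai + ej*aj + ek*ak = 0" "ei*bi + ej*bj + ek*bk = 0"
      "ei \<noteq> 0 \<or> ej \<noteq> 0 \<or> ek \<noteq> 0"
    by blast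
  have has_negative: "ei < 0 \<or> ej < 0 \<or> ek < 0"
    if "ei*ai + ej*aj + ek*ak = 0" "ei \<noteq> 0 \<or> ej \<noteq> 0 \<or> ek \<noteq> 0" for ei ej ek
  proof (rule ccontr)
    assume "\<not> ?thesis"
    hence "ei*ai \<ge> 0" "ej*aj \<ge> 0" "ek*ak \<ge> 0" using assms by auto
    hence "ei*ai = 0" "ej*aj = 0" "ek*ak = 0" using that(1) by linarith+
    thus False using that(2) assms by auto
  qed
  show ?thesis
  proof (cases "ei*ci + ej*cj + ek*ck \<ge> 0")
    case True thus ?thesis using e has_negative[OF e(1) e(3)] by blast
  next
    case False
    have "(-ei)*ai + (-ej)*aj + (-ek)*ak = 0" "(-ei)*bi + (-ej)*bj + (-ek)*bk = 0"
      "-ei \<noteq> 0 \<or> -ej \<noteq> 0 \<or> -ek \<noteq> 0" "(-ei)*ci + (-ej)*cj + (-ek)*ck \<ge> 0"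
      using e False by auto
    thus ?thesis using has_negative[of "-ei" "-ej" "-ek"] by blast
  qed
qed

lemma step_to_boundary:
  fixes x d :: "'a \<Rightarrow> real"
  assumes "finite I" and nonneg: "\<forall>p\<in>I. 0 \<le> x p"
    and "m0 \<in> I" "d m0 < 0" and moves_support: "\<forall>p\<in>I. d p \<noteq> 0 \<longrightarrow> 0 < x p"
  shows "\<exists>t\<ge>0. (\<forall>p\<in>I. 0 \<le> x p + t * d p) \<and> {p\<in>I. 0 < x p + t * d p} \<subset> {p\<in>I. 0 < x p}"
proof -
  define S where "S = {p\<in>I. d p < 0}"
  have "finite S" "S \<noteq> {}" using assms by (auto simp: S_def)
  define t where "t = Min ((\<lambda>p. x p / - d p) ` S)"
  have t_le: "t \<le> x p / - d p" if "p \<in> S" for p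
    unfolding t_def using that \<open>finite S\<close> by auto
  have "t \<in> (\<lambda>p. x p / - d p) ` S" unfolding t_def using \<open>finite S\<close> \<open>S \<noteq> {}\<close> by (intro Min_in) auto
  then obtain m where m: "m \<in> I" "d m < 0" "t = x m / - d m" by (auto simp: S_def)
  have "0 < x m" using m moves_support by auto
  hence "t \<ge> 0" using m by (simp add: divide_nonneg_neg less_imp_le)
  have nonneg': "0 \<le> x p + t * d p" if "p \<in> I" for p
  proof (cases "d p < 0")
    case True
    hence "t * - d p \<le> x p" using t_le[of p] that pos_le_divide_eq[of "- d p"] by (simp add: S_def)
    thus ?thesis by simp
  next
    case False thus ?thesis using nonneg that \<open>t \<ge> 0\<close> by simp
  qed
  have "0 < x p" if "p \<in> I" "0 < x p + t * d p" for p
    using that moves_support by (cases "d p = 0") auto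
  hence "{p\<in>I. 0 < x p + t * d p} \<subseteq> {p\<in>I. 0 < x p}" by auto
  moreover have "x m + t * d m = 0" using m(2) unfolding m(3) by (simp add: field_simps)
  hence "m \<in> {p\<in>I. 0 < x p} - {p\<in>I. 0 < x p + t * d p}" using m(1) \<open>0 < x m\<close> by simp
  ultimately have "{p\<in>I. 0 < x p + t * d p} \<subset> {p\<in>I. 0 < x p}" by blast
  with \<open>t \<ge> 0\<close> nonneg' show ?thesis by blast
qed

lemma support_reduction:
  fixes a b c x :: "'a \<Rightarrow> real"
  assumes "finite I" and nonneg: "\<forall>p\<in>I. 0 \<le> x p" and a_pos: "\<forall>p\<in>I. 0 < a p"
    and support: "2 < card {p\<in>I. 0 < x p}"
  shows "\<exists>x'. (\<forall>p\<in>I. 0 \<le> x' p)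
     \<and> (\<Sum>p\<in>I. x' p * a p) = (\<Sum>p\<in>I. x p * a p)
     \<and> (\<Sum>p\<in>I. x' p * b p) = (\<Sum>p\<in>I. x p * b p)
     \<and> (\<Sum>p\<in>I. x p * c p) \<le> (\<Sum>p\<in>I. x' p * c p)
     \<and> {p\<in>I. 0 < x' p} \<subset> {p\<in>I. 0 < x p}"
proof -
  have "Suc (Suc (Suc 0)) \<le> card {p\<in>I. 0 < x p}" using support by simp
  then obtain i j k where ijk: "i \<in> I" "j \<in> I" "k \<in> I" "0 < x i" "0 < x j" "0 < x k"
      "i \<noteq> j" "i \<noteq> k" "j \<noteq> k"
    by (auto simp: card_le_Suc_iff)
  obtain ei ej ek where e: "ei * a i + ej * a j + ek * a k = 0" "ei * b i + ej * b j + ek * b k = 0"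
      "ei * c i + ej * c j + ek * c k \<ge> 0" "ei < 0 \<or> ej < 0 \<or> ek < 0"
    using exists_kernel_direction[of "a i" "a j" "a k"] a_pos ijk by blast
  define d where "d = (\<lambda>r. if r = i then ei else if r = j then ej else if r = k then ek else 0)"
  have sum_d: "(\<Sum>r\<in>I. d r * f r) = ei * f i + ej * f j + ek * f k" for f
  proof -
    have "(\<Sum>r\<in>I. d r * f r) = (\<Sum>r\<in>{i, j, k}. d r * f r)"
      using ijk \<open>finite I\<close> by (intro sum.mono_neutral_right) (auto simp: d_def)
    thus ?thesis using ijk by (simp add: d_def)
  qed
  have "d i < 0 \<or> d j < 0 \<or> d k < 0" using e(4) ijk by (simp add: d_def)
  then obtain m where "m \<in> I" "d m < 0" using ijk by blast
  moreover have "\<forall>p\<in>I. d p \<noteq> 0 \<longrightarrow> 0 < x p" using ijk by (auto simp: d_def)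
  ultimately obtain t where t: "t \<ge> 0" "\<forall>p\<in>I. 0 \<le> x p + t * d p"
      "{p\<in>I. 0 < x p + t * d p} \<subset> {p\<in>I. 0 < x p}"
    using step_to_boundary[OF \<open>finite I\<close> nonneg] ijk by blast
  define x' where "x' p = x p + t * d p" for p
  have sum_step:
    "(\<Sum>p\<in>I. x' p * f p) = (\<Sum>p\<in>I. x p * f p) + t * (ei * f i + ej * f j + ek * f k)" for f
    by (simp add: x'_def distrib_right sum.distrib mult.assoc flip: sum_distrib_left sum_d)
  have "\<forall>p\<in>I. 0 \<le> x' p" "{p\<in>I. 0 < x' p} \<subset> {p\<in>I. 0 < x p}"
    using t(2,3) by (simp_all add: x'_def)
  moreover have "(\<Sum>p\<in>I. x' p * a p) = (\<Sum>p\<in>I. x p * a p)"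
    using e(1) by (simp add: sum_step)
  moreover have "(\<Sum>p\<in>I. x' p * b p) = (\<Sum>p\<in>I. x p * b p)"
    using e(2) by (simp add: sum_step)
  moreover have "(\<Sum>p\<in>I. x p * c p) \<le> (\<Sum>p\<in>I. x' p * c p)"
    using e(3) t(1) by (simp add: sum_step)
  ultimately show ?thesis by (intro exI[of _ x'] conjI)
qed

lemma Cp_pos: "0 < lsr p \<Longrightarrow> 0 < lrd p \<Longrightarrow> 0 < Cp lsr lrd p"
  by (simp add: Cp_def)

text \<open>The box constraint \<open>x p \<le> 1\<close> of \<open>P1\<^sup>d\<close> is redundant: each of the two sum constraints
  bounds its own term, so \<open>x p * Cp p \<le> min (lsr p) (lrd p) = Cp p\<close>.\<close>

lemma P1d_feasibleI:
  assumes lsr_pos: "\<forall>p\<in>{1..N}. lsr p > 0" and lrd_pos: "\<forall>p\<in>{1..N}. lrd p > 0"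
    and nonneg: "\<forall>p\<in>{1..N}. 0 \<le> x p"
    and sr: "(\<Sum>p=1..N. x p * Cp lsr lrd p / lsr p) \<le> 1"
    and rd: "(\<Sum>p=1..N. x p * Cp lsr lrd p / lrd p) \<le> 1"
  shows "P1d_feasible N lsr lrd x"
  unfolding P1d_feasible_def
proof (intro conjI ballI sr rd)
  fix p assume p: "p \<in> {1..N}"
  show "0 \<le> x p" using nonneg p by blast
  have term_le_1: "x p * Cp lsr lrd p / l p \<le> 1"
    if l_pos: "\<forall>q\<in>{1..N}. l q > 0" and sum_le_1: "(\<Sum>q=1..N. x q * Cp lsr lrd q / l q) \<le> 1" for l
  proof -
    have "x p * Cp lsr lrd p / l p \<le> (\<Sum>q=1..N. x q * Cp lsr lrd q / l q)"
      using p nonneg l_pos lsr_pos lrd_pos by (intro member_le_sum) (auto simp: Cp_pos less_imp_le)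
    thus ?thesis using sum_le_1 by linarith
  qed
  have "x p * Cp lsr lrd p / lsr p \<le> 1" "x p * Cp lsr lrd p / lrd p \<le> 1"
    using term_le_1 lsr_pos lrd_pos sr rd by blast+
  hence "x p * Cp lsr lrd p \<le> Cp lsr lrd p"
    using lsr_pos lrd_pos p by (simp add: divide_le_eq Cp_def)
  thus "x p \<le> 1" using Cp_pos lsr_pos lrd_pos p by simp
qed

lemma P1d_optimal_exists:
  assumes lsr_pos: "\<forall>p\<in>{1..N}. lsr p > 0" and lrd_pos: "\<forall>p\<in>{1..N}. lrd p > 0"
  shows "\<exists>x. P1d_optimal N lsr lrd x"
proof -
  define box where "box p = (if p \<in> {1..N} then {0..1} else {0::real})" for p
  define K where "K = PiE UNIV box \<inter> {x. (\<Sum>p=1..N. x p * Cp lsr lrd p / lsr p) \<le> 1}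
     \<inter> {x. (\<Sum>p=1..N. x p * Cp lsr lrd p / lrd p) \<le> 1}"
  have coordinate_continuous: "continuous_on S (\<lambda>x::nat\<Rightarrow>real. x p)" for S p
    by (rule continuous_on_subset[OF continuous_on_product_coordinates]) auto
  have "compactin (product_topology (\<lambda>_. euclidean) UNIV) (PiE UNIV box)"
    unfolding compactin_PiE by (auto simp: box_def)
  hence "compact (PiE UNIV box)" by (simp add: euclidean_product_topology)
  moreover have "closed {x::nat\<Rightarrow>real. (\<Sum>p=1..N. x p * Cp lsr lrd p / l p) \<le> 1}"
    if "\<forall>p\<in>{1..N}. l p > 0" for l
    by (intro closed_Collect_le continuous_intros coordinate_continuous) (use that in force)
  ultimately have "compact K"
    unfolding K_def using lsr_pos lrd_pos by (intro compact_Int_closed closed_Int) auto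
  moreover have "(\<lambda>_. 0) \<in> K" by (simp add: K_def box_def PiE_iff)
  moreover have "continuous_on K (P1d_obj N lsr lrd)"
    unfolding P1d_obj_def by (intro continuous_intros coordinate_continuous)
  ultimately obtain x where x: "x \<in> K" and x_max: "\<forall>y\<in>K. P1d_obj N lsr lrd y \<le> P1d_obj N lsr lrd x"
    using continuous_attains_sup by (metis empty_iff)
  have "x p \<in> {0..1}" if "p \<in> {1..N}" for p
  proof -
    have "x p \<in> box p" using x by (simp add: K_def PiE_iff)
    thus ?thesis using that by (simp add: box_def)
  qed
  hence feasible: "P1d_feasible N lsr lrd x"
    using x by (auto simp: K_def P1d_feasible_def)
  have "P1d_obj N lsr lrd y \<le> P1d_obj N lsr lrd x" if "P1d_feasible N lsr lrd y" for y
  proof -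
    \<comment> \<open>\<open>K\<close> pins the coordinates outside \<open>{1..N}\<close>, which no constraint sees, to \<open>0\<close>\<close>
    define y' where "y' p = (if p \<in> {1..N} then y p else 0)" for p
    have same_sums: "(\<Sum>p=1..N. y' p * f p) = (\<Sum>p=1..N. y p * f p)" for f :: "nat \<Rightarrow> real"
      by (rule sum.cong) (auto simp: y'_def)
    have "y' \<in> K"
      using that same_sums[of "\<lambda>p. Cp lsr lrd p / lsr p"] same_sums[of "\<lambda>p. Cp lsr lrd p / lrd p"]
      by (auto simp: K_def box_def y'_def PiE_iff P1d_feasible_def)
    thus ?thesis using x_max same_sums by (fastforce simp: P1d_obj_def)
  qed
  thus ?thesis using feasible unfolding P1d_optimal_def by blast
qed

lemma P1d_optimal_support_reduction:
  assumes lsr_pos: "\<forall>p\<in>{1..N}. lsr p > 0" and lrd_pos: "\<forall>p\<in>{1..N}. lrd p > 0"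
    and opt: "P1d_optimal N lsr lrd x" and support: "2 < card {p\<in>{1..N}. x p > 0}"
  shows "\<exists>x'. P1d_optimal N lsr lrd x' \<and> card {p\<in>{1..N}. x' p > 0} < card {p\<in>{1..N}. x p > 0}"
proof -
  let ?C = "Cp lsr lrd"
  have "\<forall>p\<in>{1..N}. 0 \<le> x p" "\<forall>p\<in>{1..N}. 0 < ?C p / lsr p"
    using opt lsr_pos lrd_pos by (auto simp: P1d_optimal_def P1d_feasible_def Cp_pos)
  then obtain x' where nonneg: "\<forall>p\<in>{1..N}. 0 \<le> x' p"
      and sr: "(\<Sum>p=1..N. x' p * (?C p / lsr p)) = (\<Sum>p=1..N. x p * (?C p / lsr p))"
      and rd: "(\<Sum>p=1..N. x' p * (?C p / lrd p)) = (\<Sum>p=1..N. x p * (?C p / lrd p))"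
      and obj: "(\<Sum>p=1..N. x p * ?C p) \<le> (\<Sum>p=1..N. x' p * ?C p)"
      and smaller: "{p\<in>{1..N}. 0 < x' p} \<subset> {p\<in>{1..N}. 0 < x p}"
    using support_reduction[of "{1..N}" x "\<lambda>p. ?C p / lsr p" "\<lambda>p. ?C p / lrd p" ?C] support
    by blast
  have "P1d_feasible N lsr lrd x'"
    using opt sr rd by (intro P1d_feasibleI[OF lsr_pos lrd_pos nonneg]) (simp_all add: P1d_optimal_def P1d_feasible_def)
  hence "P1d_optimal N lsr lrd x'"
    using opt obj by (auto simp: P1d_optimal_def P1d_obj_def)
  moreover have "card {p\<in>{1..N}. x' p > 0} < card {p\<in>{1..N}. x p > 0}"
    using smaller by (simp add: psubset_card_mono)
  ultimately show ?thesis by blast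
qed

theorem lemma5:
  fixes N :: nat and lsr lrd :: "nat \<Rightarrow> real"
  assumes "\<forall>p\<in>{1..N}. lsr p \<in> \<rat> \<and> lsr p > 0"
      and "\<forall>p\<in>{1..N}. lrd p \<in> \<rat> \<and> lrd p > 0"
  shows "\<exists>x. P1d_optimal N lsr lrd x \<and> card {p\<in>{1..N}. x p > 0} \<le> 2"
proof -
  have lsr_pos: "\<forall>p\<in>{1..N}. lsr p > 0" and lrd_pos: "\<forall>p\<in>{1..N}. lrd p > 0"
    using assms by auto
  obtain x0 where "P1d_optimal N lsr lrd x0" using P1d_optimal_exists[OF lsr_pos lrd_pos] by blast
  then obtain x where opt: "P1d_optimal N lsr lrd x"
    and fewest: "\<forall>y. P1d_optimal N lsr lrd y \<longrightarrow> card {p\<in>{1..N}. x p > 0} \<le> card {p\<in>{1..N}. y p > 0}"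
    using ex_has_least_nat[of "P1d_optimal N lsr lrd" x0 "\<lambda>x. card {p\<in>{1..N}. x p > 0}"] by blast
  have "card {p\<in>{1..N}. x p > 0} \<le> 2"
  proof (rule ccontr)
    assume "\<not> ?thesis"
    then obtain y where "P1d_optimal N lsr lrd y" "card {p\<in>{1..N}. y p > 0} < card {p\<in>{1..N}. x p > 0}"
      using P1d_optimal_support_reduction[OF lsr_pos lrd_pos opt] by auto
    with fewest show False by (meson not_le)
  qed
  with opt show ?thesis by blast
qed

end
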